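(* Let $(D,\chi)$ be a shaped oriented link diagram, and let $\mathfrak f,\mathfrak f'$ be two flattenings of $(D,\chi)$ (in the sense of the context). For each component $j$ of $D$ let $(\mu_j,\lambda_j)=(\mathfrak s(\mathfrak m_j),\mathfrak s(\mathfrak l_j))$ and $(\mu_j',\lambda_j')=(\mathfrak s'(\mathfrak m_j),\mathfrak s'(\mathfrak l_j))$ be the induced log-decoration values of $\mathfrak f$ and $\mathfrak f'$, and put $\Delta\mu_j=\mu_j'-\mu_j$, $\Delta\lambda_j=\lambda_j'-\lambda_j$ (these are integers). Then \[ \mathcal V(D,\chi,\mathfrak f')-\mathcal V(D,\chi,\mathfrak f)\equiv 4\pi^2 i\sum_j\big(\Delta\lambda_j\,\mu_j-\Delta\mu_j\,\lambda_j\big)\pmod{2\pi^2 i\mathbb Z}, \] the sum running over the components of $D$. In particular $\mathcal V(D,\chi,\mathfrak f)$ depends on the flattening $\mathfrak f$ only through its induced log-decoration values $(\mu_j,\lambda_j)_j$.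
   Context: Oriented link diagram $D$ in the plane; segments are the edges of its underlying $4$-valent planar graph, regions are the components of the complement of that graph. At each crossing $c$, rotate so both strands point right; label incoming upper-left segment $1$, incoming lower-left segment $2$, outgoing lower-right segment $1'$ (continuation of $1$), outgoing upper-right segment $2'$ (continuation of $2$); regions $N$ (top, between $1$ and $2'$), $S$ (bottom, between $2$ and $1'$), $W$ (left, between $1$ and $2$), $E$ (right, between $2'$ and $1'$); $\epsilon=\pm1$ is the sign of the crossing. Shaping: assign $\chi_i=(a_i,b_i,m_i)\in(\mathbb C^\times)^3$ to each segment so that $m$ is constant along each component and at each crossing: if positive, with $A=1-\frac{m_1b_1}{b_2}(1-\frac{a_1}{m_1})(1-\frac{1}{m_2a_2})$, $a_{1'}=a_1/A$, $a_{2'}=a_2A$, $b_{1'}=\frac{m_2b_2}{m_1}(1-m_2a_2(1-\frac{b_2}{m_1b_1}))^{-1}$, $b_{2'}=b_1(1-\frac{m_1}{a_1}(1-\frac{b_2}{m_1b_1}))$; if negative, with $\tilde A=1-\frac{b_2}{m_1b_1}(1-m_1a_1)(1-\frac{m_2}{a_2})$, $a_{1'}=a_1/\tilde A$, $a_{2'}=a_2\tilde A$, $b_{1'}=\frac{m_2b_2}{m_1}(1-\frac{a_2}{m_2}(1-\frac{m_1b_1}{b_2}))$, $b_{2'}=b_1(1-\frac{1}{m_1a_1}(1-\frac{m_1b_1}{b_2}))^{-1}$; all values finite and nonzero. A crossing is pinched if $b_{2'}=b_1$ (equivalently $b_2=m_1b_1$, $m_2b_2=m_1b_{1'}$, $m_2b_{2'}=b_{1'}$).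 Flattening $\mathfrak f$: numbers $\mu_j$ per component with $e^{2\pi i\mu_j}=m_j$; $\beta_k$ per segment with $e^{2\pi i\beta_k}=b_k$; $\gamma_R$ per region with $e^{2\pi i(\gamma_{R'}-\gamma_{R})}=a_k$ whenever regions $R'$ and $R$ lie respectively to the right and left of segment $k$ (relative to its orientation); and at each non-pinched crossing a number $\kappa$ with $e^{2\pi i\kappa}=K:=e^{2\pi i\gamma_N}/(1-(b_{2'}/b_1)^\epsilon)$. Lifted dilogarithm: for $(\zeta^0,\zeta^1)\in\mathbb C^2$ with $w=e^{\zeta^0}\neq1$ and $e^{\zeta^1}(1-w)=1$, set $p^0=(\zeta^0-\operatorname{Log}w)/2\pi i$, $p^1=(\zeta^1+\operatorname{Log}(1-w))/2\pi i\in\mathbb Z$ (principal Log, argument in $(-\pi,\pi]$) and $\mathcal L(\zeta^0,\zeta^1)=R(w)-\frac{\pi^2}{6}+\pi i\,(p^0\operatorname{Log}(1-w)+p^1\operatorname{Log}w)\in\mathbb C/2\pi^2\mathbb Z$, where $R(w)=\operatorname{Li}_2(w)+\frac12\operatorname{Log}w\operatorname{Log}(1-w)$, $\operatorname{Li}_2(w)=-\int_0^w\frac{\log(1-t)}{t}dt$; $\mathcal L$ is understood as the continuous extension of this expression. Crossing volume: at a non-pinched crossing set $\zeta_N^0=2\pi i\epsilon(\beta_{2'}-\beta_1)$, $\zeta_N^1=2\pi i(\kappa-\gamma_N)$; $\zeta_W^0=2\pi i\epsilon(\beta_2-\beta_1-\mu_1)$, $\zeta_W^1=2\pi i(\kappa-\gamma_W+\epsilon\mu_1)$;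 $\zeta_S^0=2\pi i\epsilon(\beta_2-\beta_{1'}+\mu_2-\mu_1)$, $\zeta_S^1=2\pi i(\kappa-\gamma_S+\epsilon(\mu_1-\mu_2))$; $\zeta_E^0=2\pi i\epsilon(\beta_{2'}-\beta_{1'}+\mu_2)$, $\zeta_E^1=2\pi i(\kappa-\gamma_E-\epsilon\mu_2)$ (here $\mu_1,\mu_2$ are the parameters of the components containing strands $1,2$); these satisfy the conditions for $\mathcal L$, and $\mathcal V(c,\mathfrak f)=-i\epsilon[\mathcal L(\zeta_N^0,\zeta_N^1)-\mathcal L(\zeta_W^0,\zeta_W^1)+\mathcal L(\zeta_S^0,\zeta_S^1)-\mathcal L(\zeta_E^0,\zeta_E^1)]$. At a pinched crossing $\mathcal V(c,\mathfrak f)=2\pi^2 i[\beta_1(\gamma_W-\gamma_N)-\beta_{1'}(\gamma_S-\gamma_E)+\beta_2(\gamma_S-\gamma_W)-\beta_{2'}(\gamma_E-\gamma_N)-\mu_1(\epsilon(\beta_1-\beta_{1'}+\mu_2)+\gamma_S-\gamma_W)-\mu_2(\epsilon(\beta_{2'}-\beta_2+\mu_1)+\gamma_E-\gamma_S)]$. The diagram volume is $\mathcal V(D,\chi,\mathfrak f)=\sum_c\mathcal V(c,\mathfrak f)\in\mathbb C/2\pi^2 i\mathbb Z$. Induced log-decoration: for component $j$, $\mathfrak s(\mathfrak m_j)=\mu_j$ and $\mathfrak s(\mathfrak l_j)=-w_j\mu_j+\sum_k\eta_k\beta_k$, where $w_j$ is the writhe of component $j$ (sum of signs of crossings both of whose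 strands lie in component $j$), the sum runs over segments $k$ of component $j$, and $\eta_k=1$ if segment $k$ is over-under (overstrand at its initial crossing, understrand at its terminal crossing), $\eta_k=-1$ if it is under-over, and $\eta_k=0$ otherwise. *)

theory Defs
  imports "HOL-Analysis.Analysis"
begin

text \<open>At a crossing c (rotated so that both strands point right):
  s1 c = incoming upper-left segment 1, s2 c = incoming lower-left segment 2,
  s1o c = outgoing lower-right segment 1' (continuation of 1),
  s2o c = outgoing upper-right segment 2' (continuation of 2);
  regions rN (top), rS (bottom), rW (left), rE (right); sgn c = crossing sign.
  comp k = link component containing segment k; lreg k / rreg k = regions to the
  left / right of segment k relative to its orientation.\<close>

record ('c, 's, 'r, 'j) link_diagram =
  crossings :: "'c set"
  segs :: "'s set"
  regs :: "'r set"
  comps :: "'j set"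
  sgn :: "'c \<Rightarrow> int"
  s1 :: "'c \<Rightarrow> 's"
  s2 :: "'c \<Rightarrow> 's"
  s1o :: "'c \<Rightarrow> 's"
  s2o :: "'c \<Rightarrow> 's"
  rN :: "'c \<Rightarrow> 'r"
  rS :: "'c \<Rightarrow> 'r"
  rW :: "'c \<Rightarrow> 'r"
  rE :: "'c \<Rightarrow> 'r"
  comp :: "'s \<Rightarrow> 'j"
  lreg :: "'s \<Rightarrow> 'r"
  rreg :: "'s \<Rightarrow> 'r"

definition strand_step :: "('c, 's, 'r, 'j) link_diagram \<Rightarrow> ('s \<times> 's) set" where
  "strand_step D = {(s1 D c, s1o D c) | c. c \<in> crossings D}
                 \<union> {(s2 D c, s2o D c) | c. c \<in> crossings D}"

definition link_diagram_wf :: "('c, 's, 'r, 'j) link_diagram \<Rightarrow> bool" where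
  "link_diagram_wf D \<longleftrightarrow>
     finite (crossings D) \<and> finite (segs D) \<and> finite (regs D) \<and>
     (\<forall>c\<in>crossings D.
        sgn D c \<in> {1, -1} \<and>
        s1 D c \<in> segs D \<and> s2 D c \<in> segs D \<and> s1o D c \<in> segs D \<and> s2o D c \<in> segs D \<and>
        rN D c \<in> regs D \<and> rS D c \<in> regs D \<and> rW D c \<in> regs D \<and> rE D c \<in> regs D \<and>
        comp D (s1 D c) = comp D (s1o D c) \<and> comp D (s2 D c) = comp D (s2o D c) \<and>
        lreg D (s1 D c) = rN D c \<and> rreg D (s1 D c) = rW D c \<and>
        lreg D (s2 D c) = rW D c \<and> rreg D (s2 D c) = rS D c \<and>
        lreg D (s1o D c) = rE D c \<and> rreg D (s1o D c) = rS D c \<and>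
        lreg D (s2o D c) = rN D c \<and> rreg D (s2o D c) = rE D c) \<and>
     (\<forall>k\<in>segs D. lreg D k \<in> regs D \<and> rreg D k \<in> regs D) \<and>
     bij_betw (\<lambda>(c, t). if t then s1 D c else s2 D c) (crossings D \<times> (UNIV :: bool set)) (segs D) \<and>
     bij_betw (\<lambda>(c, t). if t then s1o D c else s2o D c) (crossings D \<times> (UNIV :: bool set)) (segs D) \<and>
     comps D = comp D ` segs D \<and>
     (\<forall>k\<in>segs D. \<forall>k'\<in>segs D. comp D k = comp D k' \<longleftrightarrow> (k, k') \<in> (strand_step D)\<^sup>*)"

definition crossing_eqs :: "int \<Rightarrow> complex \<Rightarrow> complex \<Rightarrow> complex \<Rightarrow> complex \<Rightarrow> complex \<Rightarrow> complex
    \<Rightarrow> complex \<Rightarrow> complex \<Rightarrow> complex \<Rightarrow> complex \<Rightarrow> bool" where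
  "crossing_eqs eps a1 b1 m1 a2 b2 m2 a1' b1' a2' b2' \<longleftrightarrow>
     (if eps = 1 then
        (let A = 1 - (m1 * b1 / b2) * (1 - a1 / m1) * (1 - 1 / (m2 * a2)) in
           a1' = a1 / A \<and> a2' = a2 * A \<and>
           b1' = (m2 * b2 / m1) * inverse (1 - m2 * a2 * (1 - b2 / (m1 * b1))) \<and>
           b2' = b1 * (1 - (m1 / a1) * (1 - b2 / (m1 * b1))))
      else
        (let A = 1 - (b2 / (m1 * b1)) * (1 - m1 * a1) * (1 - m2 / a2) in
           a1' = a1 / A \<and> a2' = a2 * A \<and>
           b1' = (m2 * b2 / m1) * (1 - (a2 / m2) * (1 - m1 * b1 / b2)) \<and>
           b2' = b1 * inverse (1 - (1 / (m1 * a1)) * (1 - m1 * b1 / b2))))"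

text \<open>Since division by zero is 0
  in HOL, nonzeroness of the outputs forces all denominators to be nonzero.\<close>
definition shaping :: "('c, 's, 'r, 'j) link_diagram \<Rightarrow> ('s \<Rightarrow> complex) \<Rightarrow> ('s \<Rightarrow> complex)
    \<Rightarrow> ('s \<Rightarrow> complex) \<Rightarrow> bool" where
  "shaping D a b m \<longleftrightarrow>
     (\<forall>k\<in>segs D. a k \<noteq> 0 \<and> b k \<noteq> 0 \<and> m k \<noteq> 0) \<and>
     (\<forall>k\<in>segs D. \<forall>k'\<in>segs D. comp D k = comp D k' \<longrightarrow> m k = m k') \<and>
     (\<forall>c\<in>crossings D.
        crossing_eqs (sgn D c)
          (a (s1 D c)) (b (s1 D c)) (m (s1 D c))
          (a (s2 D c)) (b (s2 D c)) (m (s2 D c))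
          (a (s1o D c)) (b (s1o D c)) (a (s2o D c)) (b (s2o D c)))"

definition pinched :: "('c, 's, 'r, 'j) link_diagram \<Rightarrow> ('s \<Rightarrow> complex) \<Rightarrow> 'c \<Rightarrow> bool" where
  "pinched D b c \<longleftrightarrow> b (s2o D c) = b (s1 D c)"

definition flattening :: "('c, 's, 'r, 'j) link_diagram \<Rightarrow> ('s \<Rightarrow> complex) \<Rightarrow> ('s \<Rightarrow> complex)
    \<Rightarrow> ('s \<Rightarrow> complex) \<Rightarrow> ('j \<Rightarrow> complex) \<Rightarrow> ('s \<Rightarrow> complex) \<Rightarrow> ('r \<Rightarrow> complex)
    \<Rightarrow> ('c \<Rightarrow> complex) \<Rightarrow> bool" where
  "flattening D a b m \<mu> \<beta> \<gamma> \<kappa> \<longleftrightarrow>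
     (\<forall>k\<in>segs D. exp (2 * pi * \<i> * \<mu> (comp D k)) = m k) \<and>
     (\<forall>k\<in>segs D. exp (2 * pi * \<i> * \<beta> k) = b k) \<and>
     (\<forall>k\<in>segs D. exp (2 * pi * \<i> * (\<gamma> (rreg D k) - \<gamma> (lreg D k))) = a k) \<and>
     (\<forall>c\<in>crossings D. \<not> pinched D b c \<longrightarrow>
        exp (2 * pi * \<i> * \<kappa> c) =
          exp (2 * pi * \<i> * \<gamma> (rN D c)) / (1 - (b (s2o D c) / b (s1 D c)) powi (sgn D c)))"

text \<open>Li2 w = - integral from 0 to w of log(1-t)/t dt, along the straight segment
  (substituting t = s w), with the principal logarithm.\<close>
definition Li2 :: "complex \<Rightarrow> complex" where
  "Li2 w = - integral {0..1} (\<lambda>s::real. Ln (1 - of_real s * w) / of_real s)"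

definition Rogers :: "complex \<Rightarrow> complex" where
  "Rogers w = Li2 w + Ln w * Ln (1 - w) / 2"

definition lifted_L :: "complex \<Rightarrow> complex \<Rightarrow> complex" where
  "lifted_L z0 z1 =
     (let w = exp z0;
          p0 = (z0 - Ln w) / (2 * pi * \<i>);
          p1 = (z1 + Ln (1 - w)) / (2 * pi * \<i>)
      in Rogers w - pi\<^sup>2 / 6 + pi * \<i> * (p0 * Ln (1 - w) + p1 * Ln w))"

definition crossing_volume :: "('c, 's, 'r, 'j) link_diagram \<Rightarrow> ('s \<Rightarrow> complex)
    \<Rightarrow> ('j \<Rightarrow> complex) \<Rightarrow> ('s \<Rightarrow> complex) \<Rightarrow> ('r \<Rightarrow> complex) \<Rightarrow> ('c \<Rightarrow> complex) \<Rightarrow> 'c \<Rightarrow> complex" where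
  "crossing_volume D b \<mu> \<beta> \<gamma> \<kappa> c =
     (let e = of_int (sgn D c) :: complex;
          \<mu>1 = \<mu> (comp D (s1 D c)); \<mu>2 = \<mu> (comp D (s2 D c));
          b1 = \<beta> (s1 D c); b2 = \<beta> (s2 D c); b1' = \<beta> (s1o D c); b2' = \<beta> (s2o D c);
          gN = \<gamma> (rN D c); gS = \<gamma> (rS D c); gW = \<gamma> (rW D c); gE = \<gamma> (rE D c);
          k = \<kappa> c;
          t = 2 * pi * \<i>
      in if pinched D b c then
           2 * pi\<^sup>2 * \<i> *
             (b1 * (gW - gN) - b1' * (gS - gE) + b2 * (gS - gW) - b2' * (gE - gN)
              - \<mu>1 * (e * (b1 - b1' + \<mu>2) + gS - gW)
              - \<mu>2 * (e * (b2' - b2 + \<mu>1) + gE - gS))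
         else
           - \<i> * e *
             (lifted_L (t * e * (b2' - b1)) (t * (k - gN))
              - lifted_L (t * e * (b2 - b1 - \<mu>1)) (t * (k - gW + e * \<mu>1))
              + lifted_L (t * e * (b2 - b1' + \<mu>2 - \<mu>1)) (t * (k - gS + e * (\<mu>1 - \<mu>2)))
              - lifted_L (t * e * (b2' - b1' + \<mu>2)) (t * (k - gE - e * \<mu>2))))"

definition diagram_volume :: "('c, 's, 'r, 'j) link_diagram \<Rightarrow> ('s \<Rightarrow> complex)
    \<Rightarrow> ('j \<Rightarrow> complex) \<Rightarrow> ('s \<Rightarrow> complex) \<Rightarrow> ('r \<Rightarrow> complex) \<Rightarrow> ('c \<Rightarrow> complex) \<Rightarrow> complex" where
  "diagram_volume D b \<mu> \<beta> \<gamma> \<kappa> = (\<Sum>c\<in>crossings D. crossing_volume D b \<mu> \<beta> \<gamma> \<kappa> c)"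

definition cong_2pi2i :: "complex \<Rightarrow> complex \<Rightarrow> bool" where
  "cong_2pi2i x y \<longleftrightarrow> (\<exists>n::int. x - y = 2 * pi\<^sup>2 * \<i> * of_int n)"

text \<open>Convention: at a positive crossing strand 1 (upper-left to lower-right) is the
  overstrand, at a negative crossing strand 2 is.\<close>
definition over_start :: "('c, 's, 'r, 'j) link_diagram \<Rightarrow> 's \<Rightarrow> bool" where
  "over_start D k \<longleftrightarrow> (\<exists>c\<in>crossings D. (s1o D c = k \<and> sgn D c = 1) \<or> (s2o D c = k \<and> sgn D c = -1))"
definition under_start :: "('c, 's, 'r, 'j) link_diagram \<Rightarrow> 's \<Rightarrow> bool" where
  "under_start D k \<longleftrightarrow> (\<exists>c\<in>crossings D. (s1o D c = k \<and> sgn D c = -1) \<or> (s2o D c = k \<and> sgn D c = 1))"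
definition over_end :: "('c, 's, 'r, 'j) link_diagram \<Rightarrow> 's \<Rightarrow> bool" where
  "over_end D k \<longleftrightarrow> (\<exists>c\<in>crossings D. (s1 D c = k \<and> sgn D c = 1) \<or> (s2 D c = k \<and> sgn D c = -1))"
definition under_end :: "('c, 's, 'r, 'j) link_diagram \<Rightarrow> 's \<Rightarrow> bool" where
  "under_end D k \<longleftrightarrow> (\<exists>c\<in>crossings D. (s1 D c = k \<and> sgn D c = -1) \<or> (s2 D c = k \<and> sgn D c = 1))"

definition eta :: "('c, 's, 'r, 'j) link_diagram \<Rightarrow> 's \<Rightarrow> int" where
  "eta D k = (if over_start D k \<and> under_end D k then 1
              else if under_start D k \<and> over_end D k then -1 else 0)"

definition writhe :: "('c, 's, 'r, 'j) link_diagram \<Rightarrow> 'j \<Rightarrow> int" where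
  "writhe D j = (\<Sum>c\<in>{c\<in>crossings D. comp D (s1 D c) = j \<and> comp D (s2 D c) = j}. sgn D c)"

definition logdec_mer :: "('j \<Rightarrow> complex) \<Rightarrow> 'j \<Rightarrow> complex" where
  "logdec_mer \<mu> j = \<mu> j"

definition logdec_lon :: "('c, 's, 'r, 'j) link_diagram \<Rightarrow> ('j \<Rightarrow> complex) \<Rightarrow> ('s \<Rightarrow> complex) \<Rightarrow> 'j \<Rightarrow> complex" where
  "logdec_lon D \<mu> \<beta> j =
     - of_int (writhe D j) * \<mu> j + (\<Sum>k\<in>{k\<in>segs D. comp D k = j}. of_int (eta D k) * \<beta> k)"

end

theory Submission
  imports Defs
begin

(*
  Two flattenings of the same shaped diagram differ by integers in every log-parameter: the
  meridian parameters \<mu>, the segment parameters \<beta>, the jumps of \<gamma> across each segment and, at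
  each non-pinched crossing, \<kappa> - \<gamma>\<^sub>N.  At a non-pinched crossing the volume is a signed sum
  of four lifted dilogarithms, and shifting both arguments of the lifted dilogarithm by integer
  multiples of 2\<pi>i changes it, modulo 2\<pi>\<^sup>2, by half the symplectic pairing of the arguments with
  their shifts.  At a pinched crossing the volume is an explicit quadratic expression, and the
  pinching relations b\<^sub>2 = m\<^sub>1 b\<^sub>1, b\<^sub>1' = m\<^sub>2 b\<^sub>2' make its change the same pairing up to integers.
  Either way a crossing volume changes, modulo 2\<pi>\<^sup>2i\<int>, by 2\<pi>\<^sup>2i times a bilinear form that splits
  into contributions of the four incident segments.  Each segment is incoming at one crossing and
  outgoing at another, so in the sum over all crossings everything cancels except the terms
  \<beta>'\<^sub>k \<mu>\<^sub>k - \<mu>'\<^sub>k \<beta>\<^sub>k, which survive with coefficient 2\<eta>\<^sub>k.  Grouped by components these give the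
  pairing of the log-decorations, the writhe terms cancelling.
*)

lemma cong_2pi2i_iff: "cong_2pi2i x y \<longleftrightarrow> (x - y) / (2 * pi\<^sup>2 * \<i>) \<in> \<int>"
proof -
  have "2 * pi\<^sup>2 * \<i> \<noteq> 0" by simp
  then show ?thesis
    unfolding cong_2pi2i_def Ints_def by (auto simp: field_simps)
qed

lemma cong_2pi2iI: "n \<in> \<int> \<Longrightarrow> x - y = 2 * pi\<^sup>2 * \<i> * n \<Longrightarrow> cong_2pi2i x y"
  by (simp add: cong_2pi2i_iff)

lemma cong_2pi2i_add:
  assumes "cong_2pi2i x y" "cong_2pi2i x' y'"
  shows "cong_2pi2i (x + x') (y + y')"
proof -
  have "(x + x' - (y + y')) / (2 * pi\<^sup>2 * \<i>)
      = (x - y) / (2 * pi\<^sup>2 * \<i>) + (x' - y') / (2 * pi\<^sup>2 * \<i>)"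
    by (simp add: add_divide_distrib [symmetric])
  then show ?thesis
    using assms unfolding cong_2pi2i_iff by simp
qed

lemma cong_2pi2i_diff:
  assumes "cong_2pi2i x y" "cong_2pi2i x' y'"
  shows "cong_2pi2i (x - x') (y - y')"
proof -
  have "(x - x' - (y - y')) / (2 * pi\<^sup>2 * \<i>)
      = (x - y) / (2 * pi\<^sup>2 * \<i>) - (x' - y') / (2 * pi\<^sup>2 * \<i>)"
    by (simp add: diff_divide_distrib [symmetric])
  then show ?thesis
    using assms unfolding cong_2pi2i_iff by simp
qed

lemma cong_2pi2i_sum:
  assumes "\<And>c. c \<in> A \<Longrightarrow> cong_2pi2i (f c) (g c)"
  shows "cong_2pi2i (\<Sum>c\<in>A. f c) (\<Sum>c\<in>A. g c)"
  using assms
proof (induction A rule: infinite_finite_induct)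
  case (insert c A)
  then show ?case by (simp add: cong_2pi2i_add)
qed (simp_all add: cong_2pi2i_iff)

lemma exp_2pi_eq_iff: "exp (2 * pi * \<i> * x) = exp (2 * pi * \<i> * y) \<longleftrightarrow> x - y \<in> \<int>"
proof
  assume "exp (2 * pi * \<i> * x) = exp (2 * pi * \<i> * y)"
  then obtain n :: int where "2 * pi * \<i> * x = 2 * pi * \<i> * y + (of_int (2 * n) * pi) * \<i>"
    unfolding exp_eq by blast
  then have "2 * pi * \<i> * x = 2 * pi * \<i> * (y + of_int n)"
    by (simp add: algebra_simps)
  then show "x - y \<in> \<int>" by simp
next
  assume "x - y \<in> \<int>"
  then obtain n where "x = y + of_int n"
    by (metis Ints_cases add_diff_cancel_left' add_diff_eq)
  then have "2 * pi * \<i> * x = 2 * pi * \<i> * y + \<i> * (of_int n * (of_real pi * 2))"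
    by (simp add: algebra_simps)
  then show "exp (2 * pi * \<i> * x) = exp (2 * pi * \<i> * y)"
    by (simp only: exp_plus_2pin)
qed

lemma exp_2pi_eqE:
  assumes "exp (2 * pi * \<i> * x') = z" "exp (2 * pi * \<i> * x) = z"
  obtains n :: int where "x' = x + of_int n"
proof -
  from assms have "x' - x \<in> \<int>"
    by (simp only: exp_2pi_eq_iff[symmetric])
  then obtain n where "x' - x = of_int n"
    by (elim Ints_cases)
  then show thesis
    by (intro that[of n]) (simp add: algebra_simps)
qed

lemma exp_2pi_eq_shiftE:
  assumes "exp (2 * pi * \<i> * (x' - y')) = z" "exp (2 * pi * \<i> * (x - y)) = z"
  obtains n :: int where "x' = y' + (x - y) + of_int n"
proof -
  obtain n where "x' - y' = x - y + of_int n"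
    by (rule exp_2pi_eqE[OF assms])
  then show thesis
    by (intro that[of n]) (simp add: algebra_simps)
qed

lemma exp_eq_1_Ints: "exp z = 1 \<Longrightarrow> z / (2 * pi * \<i>) \<in> \<int>"
  using exp_2pi_eq_iff[of "z / (2 * pi * \<i>)" 0] by simp

lemma exp_2pi_add: "exp (2 * pi * \<i> * (x + y)) = exp (2 * pi * \<i> * x) * exp (2 * pi * \<i> * y)"
  by (simp add: distrib_left exp_add)

lemma exp_2pi_diff: "exp (2 * pi * \<i> * (x - y)) = exp (2 * pi * \<i> * x) / exp (2 * pi * \<i> * y)"
  by (simp add: right_diff_distrib exp_diff)

lemma exp_2pi_int_mult:
  "exp (2 * pi * \<i> * (of_int e * x)) = exp (2 * pi * \<i> * x) powi e"
  "exp (2 * pi * \<i> * of_int e * x) = exp (2 * pi * \<i> * x) powi e"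
  by (simp_all add: exp_power_int mult_ac)

lemma exp_2pi_diff_int_mult:
  "exp (2 * pi * \<i> * (x - of_int e * y)) = exp (2 * pi * \<i> * x) / exp (2 * pi * \<i> * y) powi e"
  by (simp only: exp_2pi_diff exp_2pi_int_mult)

lemma lifted_L_shift:
  assumes dilog: "exp z1 * (1 - exp z0) = 1" and "n0 \<in> \<int>" "n1 \<in> \<int>"
  shows "\<exists>q\<in>\<int>. lifted_L (z0 + 2 * pi * \<i> * n0) (z1 + 2 * pi * \<i> * n1) - lifted_L z0 z1
           = pi * \<i> * (n1 * z0 - n0 * z1) + 2 * pi\<^sup>2 * (q :: complex)"
proof -
  define w where "w = exp z0"
  have "w \<noteq> 0" "1 - w \<noteq> 0"
    using dilog by (auto simp: w_def)
  then have "exp (z0 - Ln w) = 1" "exp (z1 + Ln (1 - w)) = 1"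
    using dilog by (simp_all add: exp_diff exp_add w_def)
  note q0 = exp_eq_1_Ints[OF this(1)] and q1 = exp_eq_1_Ints[OF this(2)]
  have "exp (z0 + 2 * pi * \<i> * n0) = w"
    using exp_2pi_eq_iff[of "z0 / (2 * pi * \<i>) + n0" "z0 / (2 * pi * \<i>)"] \<open>n0 \<in> \<int>\<close>
    by (simp add: w_def distrib_left)
  define q where "q = n1 * ((z0 - Ln w) / (2 * pi * \<i>)) - n0 * ((z1 + Ln (1 - w)) / (2 * pi * \<i>))"
  have "q \<in> \<int>"
    using q0 q1 \<open>n0 \<in> \<int>\<close> \<open>n1 \<in> \<int>\<close> unfolding q_def by (intro Ints_diff Ints_mult)
  moreover have "lifted_L (z0 + 2 * pi * \<i> * n0) (z1 + 2 * pi * \<i> * n1) - lifted_L z0 z1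
      = pi * \<i> * (n0 * Ln (1 - w) + n1 * Ln w)"
    using \<open>exp (z0 + 2 * pi * \<i> * n0) = w\<close> by (simp add: lifted_L_def Let_def w_def field_simps)
  moreover have "\<dots> = pi * \<i> * (n1 * z0 - n0 * z1) + 2 * pi\<^sup>2 * (q :: complex)"
    by (simp add: q_def field_simps power2_eq_square)
  ultimately show ?thesis by auto
qed

definition wedge :: "complex \<times> complex \<Rightarrow> complex \<times> complex \<Rightarrow> complex" where
  "wedge x y = fst x * snd y - snd x * fst y"

lemma dilog_term_shift:
  fixes e x0 x1 y0 y1 :: complex
  assumes e: "e = 1 \<or> e = -1"
    and dilog: "exp (2 * pi * \<i> * x1) * (1 - exp (2 * pi * \<i> * e * x0)) = 1"
    and "y0 - x0 \<in> \<int>" "y1 - x1 \<in> \<int>"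
  shows "cong_2pi2i
           (- \<i> * e * (lifted_L (2 * pi * \<i> * e * y0) (2 * pi * \<i> * y1)
                       - lifted_L (2 * pi * \<i> * e * x0) (2 * pi * \<i> * x1)))
           (2 * pi\<^sup>2 * \<i> * wedge (x0, x1) (y0, y1))"
proof -
  define L where "L u v = lifted_L (2 * pi * \<i> * e * u) (2 * pi * \<i> * v)" for u v
  have "e \<in> \<int>"
    using e by auto
  then have "e * (y0 - x0) \<in> \<int>"
    using \<open>y0 - x0 \<in> \<int>\<close> by simp
  from lifted_L_shift[OF dilog this \<open>y1 - x1 \<in> \<int>\<close>] obtain q :: complex where "q \<in> \<int>" and
    "lifted_L (2 * pi * \<i> * e * x0 + 2 * pi * \<i> * (e * (y0 - x0)))
        (2 * pi * \<i> * x1 + 2 * pi * \<i> * (y1 - x1)) - L x0 x1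
     = pi * \<i> * ((y1 - x1) * (2 * pi * \<i> * e * x0) - e * (y0 - x0) * (2 * pi * \<i> * x1))
       + 2 * pi\<^sup>2 * q"
    unfolding L_def by blast
  then have shift: "L y0 y1 - L x0 x1 = - 2 * pi\<^sup>2 * e * (y1 * x0 - y0 * x1) + 2 * pi\<^sup>2 * q"
    by (simp add: L_def algebra_simps power2_eq_square)
  have "- \<i> * e * (L y0 y1 - L x0 x1) - 2 * pi\<^sup>2 * \<i> * wedge (x0, x1) (y0, y1)
      = 2 * pi\<^sup>2 * \<i> * (- e * q)"
    unfolding shift using e by (elim disjE) (simp_all add: wedge_def algebra_simps)
  with \<open>q \<in> \<int>\<close> \<open>e \<in> \<int>\<close> show ?thesis
    unfolding L_def by (intro cong_2pi2iI[of "- e * q"]) simp_all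
qed

lemma crossing_eqs_mirror:
  "crossing_eqs (-1) a1 b1 m1 a2 b2 m2 a1' b1' a2' b2' \<longleftrightarrow>
   crossing_eqs 1 a1 (inverse b1) (inverse m1) a2 (inverse b2) (inverse m2)
     a1' (inverse b1') a2' (inverse b2')"
proof -
  have inverse_eq_swap: "inverse x = y \<longleftrightarrow> x = inverse y" for x y :: complex
    by auto
  show ?thesis
    by (simp add: crossing_eqs_def Let_def inverse_eq_swap divide_inverse inverse_mult_distrib
        mult_ac)
qed

lemma crossing_eqs_pos_identities:
  fixes a1 b1 m1 a2 b2 m2 a1' b1' a2' b2' :: complex
  assumes eqs: "crossing_eqs 1 a1 b1 m1 a2 b2 m2 a1' b1' a2' b2'"
    and nz: "a1 \<noteq> 0" "b1 \<noteq> 0" "m1 \<noteq> 0" "a2 \<noteq> 0" "b2 \<noteq> 0" "m2 \<noteq> 0" "b1' \<noteq> 0"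
  shows "m1 * (1 - b2 / (m1 * b1)) = a1 * (1 - b2' / b1)"
    and "m1 / m2 * (1 - m2 * b2 / (m1 * b1')) = a1 * a2 * (1 - b2' / b1)"
    and "inverse m2 * (1 - m2 * b2' / b1') = a2' * (1 - b2' / b1)"
proof -
  define A where "A = 1 - (m1 * b1 / b2) * (1 - a1 / m1) * (1 - 1 / (m2 * a2))"
  define Dn where "Dn = 1 - m2 * a2 * (1 - b2 / (m1 * b1))"
  have a2': "a2' = a2 * A" and b1': "b1' = (m2 * b2 / m1) / Dn"
    and b2': "b2' = b1 * (1 - (m1 / a1) * (1 - b2 / (m1 * b1)))"
    using eqs by (simp_all add: crossing_eqs_def A_def Dn_def Let_def divide_inverse)
  have "Dn \<noteq> 0"
    using nz(7) by (auto simp: b1')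
  show "m1 * (1 - b2 / (m1 * b1)) = a1 * (1 - b2' / b1)"
    using nz by (simp add: b2' field_simps)
  show "m1 / m2 * (1 - m2 * b2 / (m1 * b1')) = a1 * a2 * (1 - b2' / b1)"
    using nz \<open>Dn \<noteq> 0\<close> by (simp add: b1' b2' field_simps) (simp add: Dn_def field_simps)
  show "inverse m2 * (1 - m2 * b2' / b1') = a2' * (1 - b2' / b1)"
    using nz \<open>Dn \<noteq> 0\<close> by (simp add: a2' b1' b2' field_simps) (simp add: A_def Dn_def field_simps)
qed

lemma crossing_eqs_identities:
  fixes a1 b1 m1 a2 b2 m2 a1' b1' a2' b2' :: complex
  assumes e: "e = 1 \<or> e = -1" and eqs: "crossing_eqs e a1 b1 m1 a2 b2 m2 a1' b1' a2' b2'"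
    and nz: "a1 \<noteq> 0" "b1 \<noteq> 0" "m1 \<noteq> 0" "a2 \<noteq> 0" "b2 \<noteq> 0" "m2 \<noteq> 0" "b1' \<noteq> 0"
  shows "m1 powi e * (1 - (b2 / (m1 * b1)) powi e) = a1 * (1 - (b2' / b1) powi e)" (is ?W)
    and "(m1 / m2) powi e * (1 - (m2 * b2 / (m1 * b1')) powi e) = a1 * a2 * (1 - (b2' / b1) powi e)"
      (is ?S)
    and "m2 powi (-e) * (1 - (m2 * b2' / b1') powi e) = a2' * (1 - (b2' / b1) powi e)" (is ?E)
proof -
  have "?W \<and> ?S \<and> ?E"
    using e
  proof (elim disjE)
    assume "e = 1"
    then show ?thesis
      using crossing_eqs_pos_identities[OF _ nz] eqs by (simp add: power_int_minus)
  next
    assume "e = -1"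
    then have "crossing_eqs 1 a1 (inverse b1) (inverse m1) a2 (inverse b2) (inverse m2)
        a1' (inverse b1') a2' (inverse b2')"
      using eqs crossing_eqs_mirror by simp
    from crossing_eqs_pos_identities[OF this] nz \<open>e = -1\<close> show ?thesis
      by (simp add: power_int_minus field_simps)
  qed
  then show ?W ?S ?E by blast+
qed

lemma crossing_eqs_pinched:
  fixes a1 b1 m1 a2 b2 m2 a1' b1' a2' b2' :: complex
  assumes e: "e = 1 \<or> e = -1" and eqs: "crossing_eqs e a1 b1 m1 a2 b2 m2 a1' b1' a2' b2'"
    and nz: "a1 \<noteq> 0" "b1 \<noteq> 0" "m1 \<noteq> 0" "a2 \<noteq> 0" "b2 \<noteq> 0" "m2 \<noteq> 0" "b1' \<noteq> 0"
    and pinched: "b2' = b1"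
  shows "b2 = m1 * b1" and "b1' = m2 * b2'"
proof -
  have "(b2 / (m1 * b1)) powi e = 1" "(m2 * b2 / (m1 * b1')) powi e = 1"
    using crossing_eqs_identities(1,2)[OF e eqs nz] nz pinched by simp_all
  then have "b2 / (m1 * b1) = 1" "m2 * b2 / (m1 * b1') = 1"
    using e by (auto simp: power_int_minus)
  then show "b2 = m1 * b1" and "b1' = m2 * b2'"
    using nz pinched by (simp_all add: field_simps)
qed

lemma link_diagram_wf_crossing:
  assumes "link_diagram_wf D" "c \<in> crossings D"
  shows "sgn D c = 1 \<or> sgn D c = -1"
    and "s1 D c \<in> segs D" "s2 D c \<in> segs D" "s1o D c \<in> segs D" "s2o D c \<in> segs D"
    and "comp D (s1o D c) = comp D (s1 D c)" "comp D (s2o D c) = comp D (s2 D c)"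
    and "lreg D (s1 D c) = rN D c" "rreg D (s1 D c) = rW D c"
    and "lreg D (s2 D c) = rW D c" "rreg D (s2 D c) = rS D c"
    and "lreg D (s1o D c) = rE D c" "rreg D (s1o D c) = rS D c"
    and "lreg D (s2o D c) = rN D c" "rreg D (s2o D c) = rE D c"
  using assms unfolding link_diagram_wf_def by auto

lemma sum_pair_reindex:
  assumes "bij_betw (\<lambda>(c, t). if t then f c else g c) (C \<times> UNIV) S"
  shows "(\<Sum>c\<in>C. h (f c) + h (g c)) = (\<Sum>k\<in>S. h k)"
proof -
  have "(\<Sum>k\<in>S. h k) = (\<Sum>(c, t)\<in>C \<times> UNIV. h (if t then f c else g c))"
    using sum.reindex_bij_betw[OF assms, of h] by (simp add: case_prod_beta)
  also have "\<dots> = (\<Sum>c\<in>C. h (f c) + h (g c))"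
    by (simp add: sum.cartesian_product[symmetric] UNIV_bool add.commute)
  finally show ?thesis ..
qed

lemma sum_incoming_segments:
  "link_diagram_wf D \<Longrightarrow> (\<Sum>c\<in>crossings D. h (s1 D c) + h (s2 D c)) = (\<Sum>k\<in>segs D. h k)"
  unfolding link_diagram_wf_def by (blast intro: sum_pair_reindex)

lemma sum_outgoing_segments:
  "link_diagram_wf D \<Longrightarrow> (\<Sum>c\<in>crossings D. h (s1o D c) + h (s2o D c)) = (\<Sum>k\<in>segs D. h k)"
  unfolding link_diagram_wf_def by (blast intro: sum_pair_reindex)

lemma bij_pair_inj:
  assumes "bij_betw (\<lambda>(c, t). if t then f c else g c) (C \<times> UNIV) S" "c \<in> C" "c' \<in> C"
  shows "f c' = f c \<longleftrightarrow> c' = c" "g c' = g c \<longleftrightarrow> c' = c" "f c' \<noteq> g c"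
proof -
  have inj: "(if t' then f c' else g c') = (if t then f c else g c) \<Longrightarrow> c' = c \<and> t' = t" for t t'
    using inj_onD[OF bij_betw_imp_inj_on[OF assms(1)], of "(c', t')" "(c, t)"] assms(2,3) by auto
  show "f c' = f c \<longleftrightarrow> c' = c" "g c' = g c \<longleftrightarrow> c' = c" "f c' \<noteq> g c"
    using inj[of True True] inj[of False False] inj[where t = False and t' = True] by auto
qed

lemma
  assumes wf: "link_diagram_wf D" and c: "c \<in> crossings D"
  shows over_end_iff: "over_end D (s1 D c) \<longleftrightarrow> sgn D c = 1"
      "over_end D (s2 D c) \<longleftrightarrow> sgn D c = -1"
    and under_end_iff: "under_end D (s1 D c) \<longleftrightarrow> sgn D c = -1"
      "under_end D (s2 D c) \<longleftrightarrow> sgn D c = 1"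
    and over_start_iff: "over_start D (s1o D c) \<longleftrightarrow> sgn D c = 1"
      "over_start D (s2o D c) \<longleftrightarrow> sgn D c = -1"
    and under_start_iff: "under_start D (s1o D c) \<longleftrightarrow> sgn D c = -1"
      "under_start D (s2o D c) \<longleftrightarrow> sgn D c = 1"
proof -
  have "bij_betw (\<lambda>(c, t). if t then s1 D c else s2 D c) (crossings D \<times> UNIV) (segs D)"
    and "bij_betw (\<lambda>(c, t). if t then s1o D c else s2o D c) (crossings D \<times> UNIV) (segs D)"
    using wf unfolding link_diagram_wf_def by blast+
  note inj = bij_pair_inj[OF this(1) c] bij_pair_inj[OF this(1) _ c]
    bij_pair_inj[OF this(2) c] bij_pair_inj[OF this(2) _ c]
  show "over_end D (s1 D c) \<longleftrightarrow> sgn D c = 1" "over_end D (s2 D c) \<longleftrightarrow> sgn D c = -1"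
    "under_end D (s1 D c) \<longleftrightarrow> sgn D c = -1" "under_end D (s2 D c) \<longleftrightarrow> sgn D c = 1"
    "over_start D (s1o D c) \<longleftrightarrow> sgn D c = 1" "over_start D (s2o D c) \<longleftrightarrow> sgn D c = -1"
    "under_start D (s1o D c) \<longleftrightarrow> sgn D c = -1" "under_start D (s2o D c) \<longleftrightarrow> sgn D c = 1"
    unfolding over_end_def under_end_def over_start_def under_start_def
    using c inj by (auto; metis)+
qed

lemma
  assumes wf: "link_diagram_wf D" and k: "k \<in> segs D"
  shows under_end_iff_not_over_end: "under_end D k \<longleftrightarrow> \<not> over_end D k"
    and under_start_iff_not_over_start: "under_start D k \<longleftrightarrow> \<not> over_start D k"
proof -
  have "k \<in> (\<lambda>(c, t). if t then s1 D c else s2 D c) ` (crossings D \<times> UNIV)"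
    and "k \<in> (\<lambda>(c, t). if t then s1o D c else s2o D c) ` (crossings D \<times> UNIV)"
    using wf k unfolding link_diagram_wf_def bij_betw_def by blast+
  then obtain c t c' t' where c: "c \<in> crossings D" "k = (if t then s1 D c else s2 D c)"
    and c': "c' \<in> crossings D" "k = (if t' then s1o D c' else s2o D c')"
    by (elim imageE) (simp split: prod.splits)
  show "under_end D k \<longleftrightarrow> \<not> over_end D k"
    using c link_diagram_wf_crossing(1)[OF wf c(1)] over_end_iff[OF wf c(1)]
      under_end_iff[OF wf c(1)]
    by (cases t) auto
  show "under_start D k \<longleftrightarrow> \<not> over_start D k"
    using c' link_diagram_wf_crossing(1)[OF wf c'(1)] over_start_iff[OF wf c'(1)]
      under_start_iff[OF wf c'(1)]
    by (cases t') auto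
qed

definition over_sign_end :: "('c, 's, 'r, 'j) link_diagram \<Rightarrow> 's \<Rightarrow> complex" where
  "over_sign_end D k = (if over_end D k then 1 else -1)"

definition over_sign_start :: "('c, 's, 'r, 'j) link_diagram \<Rightarrow> 's \<Rightarrow> complex" where
  "over_sign_start D k = (if over_start D k then 1 else -1)"

lemma eta_eq_over_signs:
  "link_diagram_wf D \<Longrightarrow> k \<in> segs D \<Longrightarrow>
     2 * of_int (eta D k) = over_sign_start D k - over_sign_end D k"
  by (simp add: eta_def over_sign_start_def over_sign_end_def
      under_end_iff_not_over_end under_start_iff_not_over_start)

lemma over_signs_at_crossing:
  assumes "link_diagram_wf D" "c \<in> crossings D"
  shows "over_sign_end D (s1 D c) = of_int (sgn D c)"
    and "over_sign_end D (s2 D c) = - of_int (sgn D c)"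
    and "over_sign_start D (s1o D c) = of_int (sgn D c)"
    and "over_sign_start D (s2o D c) = - of_int (sgn D c)"
  using link_diagram_wf_crossing(1)[OF assms] over_end_iff[OF assms] over_start_iff[OF assms]
  by (auto simp: over_sign_end_def over_sign_start_def)

definition segment_form :: "('c, 's, 'r, 'j) link_diagram \<Rightarrow> ('j \<Rightarrow> complex) \<Rightarrow> ('s \<Rightarrow> complex)
    \<Rightarrow> ('r \<Rightarrow> complex) \<Rightarrow> ('j \<Rightarrow> complex) \<Rightarrow> ('s \<Rightarrow> complex) \<Rightarrow> ('r \<Rightarrow> complex) \<Rightarrow> 's \<Rightarrow> complex"
  where
  "segment_form D \<mu> \<beta> \<gamma> \<mu>' \<beta>' \<gamma>' k =
     wedge (\<beta> k, \<gamma> (lreg D k) - \<gamma> (rreg D k)) (\<beta>' k, \<gamma>' (lreg D k) - \<gamma>' (rreg D k))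
     - wedge (\<mu> (comp D k), \<gamma> (rreg D k)) (\<mu>' (comp D k), \<gamma>' (rreg D k))"

definition strand_form :: "('c, 's, 'r, 'j) link_diagram \<Rightarrow> ('j \<Rightarrow> complex) \<Rightarrow> ('s \<Rightarrow> complex)
    \<Rightarrow> ('j \<Rightarrow> complex) \<Rightarrow> ('s \<Rightarrow> complex) \<Rightarrow> 's \<Rightarrow> complex" where
  "strand_form D \<mu> \<beta> \<mu>' \<beta>' k = wedge (\<mu> (comp D k), \<beta> k) (\<mu>' (comp D k), \<beta>' k)"

(* Arranged segment by segment, so that its sum over all crossings telescopes. *)
definition crossing_form :: "('c, 's, 'r, 'j) link_diagram \<Rightarrow> ('j \<Rightarrow> complex) \<Rightarrow> ('s \<Rightarrow> complex)
    \<Rightarrow> ('r \<Rightarrow> complex) \<Rightarrow> ('j \<Rightarrow> complex) \<Rightarrow> ('s \<Rightarrow> complex) \<Rightarrow> ('r \<Rightarrow> complex) \<Rightarrow> 'c \<Rightarrow> complex"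
  where
  "crossing_form D \<mu> \<beta> \<gamma> \<mu>' \<beta>' \<gamma>' c =
     (let S = segment_form D \<mu> \<beta> \<gamma> \<mu>' \<beta>' \<gamma>'; T = strand_form D \<mu> \<beta> \<mu>' \<beta>' in
      S (s1 D c) + S (s2 D c) - S (s1o D c) - S (s2o D c)
      - of_int (sgn D c) * (T (s1 D c) - T (s2 D c) - T (s1o D c) + T (s2o D c)))"

lemma sum_crossing_form:
  assumes wf: "link_diagram_wf D"
  shows "(\<Sum>c\<in>crossings D. crossing_form D \<mu> \<beta> \<gamma> \<mu>' \<beta>' \<gamma>' c)
    = 2 * (\<Sum>k\<in>segs D. of_int (eta D k) * strand_form D \<mu> \<beta> \<mu>' \<beta>' k)"
proof -
  define S where "S = segment_form D \<mu> \<beta> \<gamma> \<mu>' \<beta>' \<gamma>'"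
  define T where "T = strand_form D \<mu> \<beta> \<mu>' \<beta>'"
  define E where "E k = over_sign_end D k * T k" for k
  define B where "B k = over_sign_start D k * T k" for k
  have "crossing_form D \<mu> \<beta> \<gamma> \<mu>' \<beta>' \<gamma>' c
      = ((S (s1 D c) + S (s2 D c)) - (S (s1o D c) + S (s2o D c)))
        + ((B (s1o D c) + B (s2o D c)) - (E (s1 D c) + E (s2 D c)))" if "c \<in> crossings D" for c
    using over_signs_at_crossing[OF wf that]
    by (simp add: crossing_form_def S_def T_def E_def B_def Let_def algebra_simps)
  then have "(\<Sum>c\<in>crossings D. crossing_form D \<mu> \<beta> \<gamma> \<mu>' \<beta>' \<gamma>' c)
      = ((\<Sum>c\<in>crossings D. S (s1 D c) + S (s2 D c)) - (\<Sum>c\<in>crossings D. S (s1o D c) + S (s2o D c)))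
        + ((\<Sum>c\<in>crossings D. B (s1o D c) + B (s2o D c)) - (\<Sum>c\<in>crossings D. E (s1 D c) + E (s2 D c)))"
    by (simp add: sum.distrib sum_subtractf)
  also have "\<dots> = (\<Sum>k\<in>segs D. B k) - (\<Sum>k\<in>segs D. E k)"
    by (simp add: sum_incoming_segments[OF wf] sum_outgoing_segments[OF wf])
  also have "\<dots> = (\<Sum>k\<in>segs D. (over_sign_start D k - over_sign_end D k) * T k)"
    by (simp add: B_def E_def sum_subtractf[symmetric] left_diff_distrib)
  also have "\<dots> = (\<Sum>k\<in>segs D. 2 * (of_int (eta D k) * T k))"
    by (rule sum.cong) (simp_all add: eta_eq_over_signs[OF wf, symmetric])
  finally show ?thesis
    by (simp add: T_def sum_distrib_left)
qed

lemma logdec_wedge_component: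
  "(logdec_lon D \<mu>' \<beta>' j - logdec_lon D \<mu> \<beta> j) * logdec_mer \<mu> j
     - (logdec_mer \<mu>' j - logdec_mer \<mu> j) * logdec_lon D \<mu> \<beta> j
   = (\<Sum>k\<in>{k\<in>segs D. comp D k = j}. of_int (eta D k) * strand_form D \<mu> \<beta> \<mu>' \<beta>' k)"
proof -
  define K where "K = {k\<in>segs D. comp D k = j}"
  have "(\<Sum>k\<in>K. of_int (eta D k) * strand_form D \<mu> \<beta> \<mu>' \<beta>' k)
      = (\<Sum>k\<in>K. \<mu> j * (of_int (eta D k) * \<beta>' k) - \<mu>' j * (of_int (eta D k) * \<beta> k))"
    by (rule sum.cong) (auto simp: K_def strand_form_def wedge_def algebra_simps)
  also have "\<dots> = \<mu> j * (\<Sum>k\<in>K. of_int (eta D k) * \<beta>' k) - \<mu>' j * (\<Sum>k\<in>K. of_int (eta D k) * \<beta> k)"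
    by (simp add: sum_subtractf sum_distrib_left)
  finally show ?thesis
    by (simp add: logdec_lon_def logdec_mer_def K_def algebra_simps)
qed

lemma sum_logdec_wedge:
  assumes wf: "link_diagram_wf D"
  shows "(\<Sum>j\<in>comps D. (logdec_lon D \<mu>' \<beta>' j - logdec_lon D \<mu> \<beta> j) * logdec_mer \<mu> j
            - (logdec_mer \<mu>' j - logdec_mer \<mu> j) * logdec_lon D \<mu> \<beta> j)
       = (\<Sum>k\<in>segs D. of_int (eta D k) * strand_form D \<mu> \<beta> \<mu>' \<beta>' k)"
proof -
  have "finite (segs D)" "comps D = comp D ` segs D"
    using wf unfolding link_diagram_wf_def by blast+
  then show ?thesis
    by (simp add: logdec_wedge_component sum.image_gen[symmetric])
qed

lemma shaping_at_crossing:
  assumes wf: "link_diagram_wf D" and sh: "shaping D a b m" and c: "c \<in> crossings D"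
  shows "crossing_eqs (sgn D c) (a (s1 D c)) (b (s1 D c)) (m (s1 D c))
           (a (s2 D c)) (b (s2 D c)) (m (s2 D c))
           (a (s1o D c)) (b (s1o D c)) (a (s2o D c)) (b (s2o D c))"
    and "a (s1 D c) \<noteq> 0" "b (s1 D c) \<noteq> 0" "m (s1 D c) \<noteq> 0"
      "a (s2 D c) \<noteq> 0" "b (s2 D c) \<noteq> 0" "m (s2 D c) \<noteq> 0"
      "a (s1o D c) \<noteq> 0" "b (s1o D c) \<noteq> 0" "a (s2o D c) \<noteq> 0" "b (s2o D c) \<noteq> 0"
  using sh c link_diagram_wf_crossing(2-5)[OF wf c] unfolding shaping_def by blast+

lemma flattening_at_crossing:
  assumes wf: "link_diagram_wf D" and fl: "flattening D a b m \<mu> \<beta> \<gamma> \<kappa>" and c: "c \<in> crossings D"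
  shows "exp (2 * pi * \<i> * \<mu> (comp D (s1 D c))) = m (s1 D c)"
    and "exp (2 * pi * \<i> * \<mu> (comp D (s2 D c))) = m (s2 D c)"
    and "exp (2 * pi * \<i> * \<beta> (s1 D c)) = b (s1 D c)"
    and "exp (2 * pi * \<i> * \<beta> (s2 D c)) = b (s2 D c)"
    and "exp (2 * pi * \<i> * \<beta> (s1o D c)) = b (s1o D c)"
    and "exp (2 * pi * \<i> * \<beta> (s2o D c)) = b (s2o D c)"
    and "exp (2 * pi * \<i> * (\<gamma> (rW D c) - \<gamma> (rN D c))) = a (s1 D c)"
    and "exp (2 * pi * \<i> * (\<gamma> (rS D c) - \<gamma> (rN D c))) = a (s2 D c) * a (s1 D c)"
    and "exp (2 * pi * \<i> * (\<gamma> (rE D c) - \<gamma> (rN D c))) = a (s2o D c)"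
    and "\<not> pinched D b c \<Longrightarrow> exp (2 * pi * \<i> * (\<kappa> c - \<gamma> (rN D c)))
           = inverse (1 - (b (s2o D c) / b (s1 D c)) powi sgn D c)"
proof -
  note W = link_diagram_wf_crossing[OF wf c]
  have m: "\<And>k. k \<in> segs D \<Longrightarrow> exp (2 * pi * \<i> * \<mu> (comp D k)) = m k"
    and b: "\<And>k. k \<in> segs D \<Longrightarrow> exp (2 * pi * \<i> * \<beta> k) = b k"
    and a: "\<And>k. k \<in> segs D \<Longrightarrow> exp (2 * pi * \<i> * (\<gamma> (rreg D k) - \<gamma> (lreg D k))) = a k"
    using fl unfolding flattening_def by blast+
  show "exp (2 * pi * \<i> * \<mu> (comp D (s1 D c))) = m (s1 D c)"
    "exp (2 * pi * \<i> * \<mu> (comp D (s2 D c))) = m (s2 D c)"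
    "exp (2 * pi * \<i> * \<beta> (s1 D c)) = b (s1 D c)" "exp (2 * pi * \<i> * \<beta> (s2 D c)) = b (s2 D c)"
    "exp (2 * pi * \<i> * \<beta> (s1o D c)) = b (s1o D c)" "exp (2 * pi * \<i> * \<beta> (s2o D c)) = b (s2o D c)"
    using m b W(2-5) by auto
  show "exp (2 * pi * \<i> * (\<gamma> (rW D c) - \<gamma> (rN D c))) = a (s1 D c)"
    "exp (2 * pi * \<i> * (\<gamma> (rE D c) - \<gamma> (rN D c))) = a (s2o D c)"
    using a[OF W(2)] a[OF W(5)] W(8,9,14,15) by simp_all
  have "\<gamma> (rS D c) - \<gamma> (rN D c) = (\<gamma> (rS D c) - \<gamma> (rW D c)) + (\<gamma> (rW D c) - \<gamma> (rN D c))"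
    by simp
  then show "exp (2 * pi * \<i> * (\<gamma> (rS D c) - \<gamma> (rN D c))) = a (s2 D c) * a (s1 D c)"
    using a[OF W(2)] a[OF W(3)] W(8-11) by (simp only: exp_2pi_add)
  assume "\<not> pinched D b c"
  then have "exp (2 * pi * \<i> * \<kappa> c)
      = exp (2 * pi * \<i> * \<gamma> (rN D c)) * inverse (1 - (b (s2o D c) / b (s1 D c)) powi sgn D c)"
    using fl c unfolding flattening_def by (simp add: divide_inverse)
  then show "exp (2 * pi * \<i> * (\<kappa> c - \<gamma> (rN D c)))
      = inverse (1 - (b (s2o D c) / b (s1 D c)) powi sgn D c)"
    by (simp only: exp_2pi_diff) simp
qed

lemma flattenings_shift_at_crossing:
  assumes wf: "link_diagram_wf D" and fl: "flattening D a b m \<mu> \<beta> \<gamma> \<kappa>"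
    and fl': "flattening D a b m \<mu>' \<beta>' \<gamma>' \<kappa>'" and c: "c \<in> crossings D"
  obtains j1 j2 k1 k2 k3 k4 r1 r2 r4 :: int where
    "\<mu>' (comp D (s1 D c)) = \<mu> (comp D (s1 D c)) + of_int j1"
    "\<mu>' (comp D (s2 D c)) = \<mu> (comp D (s2 D c)) + of_int j2"
    "\<beta>' (s1 D c) = \<beta> (s1 D c) + of_int k1" "\<beta>' (s2 D c) = \<beta> (s2 D c) + of_int k2"
    "\<beta>' (s1o D c) = \<beta> (s1o D c) + of_int k3" "\<beta>' (s2o D c) = \<beta> (s2o D c) + of_int k4"
    "\<gamma>' (rW D c) = \<gamma>' (rN D c) + (\<gamma> (rW D c) - \<gamma> (rN D c)) + of_int r1"
    "\<gamma>' (rS D c) = \<gamma>' (rN D c) + (\<gamma> (rS D c) - \<gamma> (rN D c)) + of_int r2"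
    "\<gamma>' (rE D c) = \<gamma>' (rN D c) + (\<gamma> (rE D c) - \<gamma> (rN D c)) + of_int r4"
proof -
  note F = flattening_at_crossing[OF wf fl c] and F' = flattening_at_crossing[OF wf fl' c]
  obtain j1 where "\<mu>' (comp D (s1 D c)) = \<mu> (comp D (s1 D c)) + of_int j1"
    by (rule exp_2pi_eqE[OF F'(1) F(1)])
  moreover obtain j2 where "\<mu>' (comp D (s2 D c)) = \<mu> (comp D (s2 D c)) + of_int j2"
    by (rule exp_2pi_eqE[OF F'(2) F(2)])
  moreover obtain k1 where "\<beta>' (s1 D c) = \<beta> (s1 D c) + of_int k1"
    by (rule exp_2pi_eqE[OF F'(3) F(3)])
  moreover obtain k2 where "\<beta>' (s2 D c) = \<beta> (s2 D c) + of_int k2"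
    by (rule exp_2pi_eqE[OF F'(4) F(4)])
  moreover obtain k3 where "\<beta>' (s1o D c) = \<beta> (s1o D c) + of_int k3"
    by (rule exp_2pi_eqE[OF F'(5) F(5)])
  moreover obtain k4 where "\<beta>' (s2o D c) = \<beta> (s2o D c) + of_int k4"
    by (rule exp_2pi_eqE[OF F'(6) F(6)])
  moreover obtain r1 where "\<gamma>' (rW D c) = \<gamma>' (rN D c) + (\<gamma> (rW D c) - \<gamma> (rN D c)) + of_int r1"
    by (rule exp_2pi_eq_shiftE[OF F'(7) F(7)])
  moreover obtain r2 where "\<gamma>' (rS D c) = \<gamma>' (rN D c) + (\<gamma> (rS D c) - \<gamma> (rN D c)) + of_int r2"
    by (rule exp_2pi_eq_shiftE[OF F'(8) F(8)])
  moreover obtain r4 where "\<gamma>' (rE D c) = \<gamma>' (rN D c) + (\<gamma> (rE D c) - \<gamma> (rN D c)) + of_int r4"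
    by (rule exp_2pi_eq_shiftE[OF F'(9) F(9)])
  ultimately show thesis
    by (rule that)
qed

lemma flattenings_shift_kappa:
  assumes wf: "link_diagram_wf D" and fl: "flattening D a b m \<mu> \<beta> \<gamma> \<kappa>"
    and fl': "flattening D a b m \<mu>' \<beta>' \<gamma>' \<kappa>'" and c: "c \<in> crossings D"
    and np: "\<not> pinched D b c"
  obtains r :: int where "\<kappa>' c = \<gamma>' (rN D c) + (\<kappa> c - \<gamma> (rN D c)) + of_int r"
  by (rule exp_2pi_eq_shiftE[OF flattening_at_crossing(10)[OF wf fl' c np]
        flattening_at_crossing(10)[OF wf fl c np]])

datatype quadrant = North | West | South | East

(* The arguments (\<zeta>\<^sup>0 / (2\<pi>i\<epsilon>), \<zeta>\<^sup>1 / (2\<pi>i)) of the lifted dilogarithm at quadrant q of c. *)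
definition dilog_args :: "('c, 's, 'r, 'j) link_diagram \<Rightarrow> ('j \<Rightarrow> complex) \<Rightarrow> ('s \<Rightarrow> complex)
    \<Rightarrow> ('r \<Rightarrow> complex) \<Rightarrow> ('c \<Rightarrow> complex) \<Rightarrow> 'c \<Rightarrow> quadrant \<Rightarrow> complex \<times> complex" where
  "dilog_args D \<mu> \<beta> \<gamma> \<kappa> c q =
     (let e = of_int (sgn D c); \<mu>1 = \<mu> (comp D (s1 D c)); \<mu>2 = \<mu> (comp D (s2 D c)) in
      case q of
        North \<Rightarrow> (\<beta> (s2o D c) - \<beta> (s1 D c), \<kappa> c - \<gamma> (rN D c))
      | West \<Rightarrow> (\<beta> (s2 D c) - \<beta> (s1 D c) - \<mu>1, \<kappa> c - \<gamma> (rW D c) + e * \<mu>1)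
      | South \<Rightarrow> (\<beta> (s2 D c) - \<beta> (s1o D c) + \<mu>2 - \<mu>1, \<kappa> c - \<gamma> (rS D c) + e * (\<mu>1 - \<mu>2))
      | East \<Rightarrow> (\<beta> (s2o D c) - \<beta> (s1o D c) + \<mu>2, \<kappa> c - \<gamma> (rE D c) - e * \<mu>2))"

lemma dilog_args_condition:
  assumes wf: "link_diagram_wf D" and sh: "shaping D a b m" and fl: "flattening D a b m \<mu> \<beta> \<gamma> \<kappa>"
    and c: "c \<in> crossings D" and np: "\<not> pinched D b c"
  shows "exp (2 * pi * \<i> * snd (dilog_args D \<mu> \<beta> \<gamma> \<kappa> c q))
           * (1 - exp (2 * pi * \<i> * of_int (sgn D c) * fst (dilog_args D \<mu> \<beta> \<gamma> \<kappa> c q))) = 1"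
proof -
  note e = link_diagram_wf_crossing(1)[OF wf c]
  note S = shaping_at_crossing[OF wf sh c]
  note F = flattening_at_crossing[OF wf fl c]
  note I = crossing_eqs_identities[OF e S(1-7) S(9)]
  define w where "w = (b (s2o D c) / b (s1 D c)) powi sgn D c"
  have "w \<noteq> 1"
    using np e S unfolding pinched_def w_def by (auto simp: power_int_minus field_simps)
  have K: "exp (2 * pi * \<i> * (\<kappa> c - \<gamma> R))
      = inverse (1 - w) / exp (2 * pi * \<i> * (\<gamma> R - \<gamma> (rN D c)))" for R
    using exp_2pi_diff[of "\<kappa> c - \<gamma> (rN D c)" "\<gamma> R - \<gamma> (rN D c)"] F(10)[OF np, folded w_def] by simp
  \<comment> \<open>each \<open>exp (2\<pi>i (\<kappa> - \<gamma> R))\<close> must be rewritten by K before \<open>exp_2pi_diff\<close> could split it\<close>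
  show ?thesis
    using I S(2-11) \<open>w \<noteq> 1\<close>
    by (cases q)
      (simp_all only: dilog_args_def Let_def quadrant.case prod.sel exp_2pi_int_mult exp_2pi_add
        exp_2pi_diff_int_mult K diff_self mult_zero_right exp_zero F(7-9),
       simp_all only: exp_2pi_add exp_2pi_diff F(1-6),
       simp_all add: w_def power_int_minus field_simps)
qed

lemma dilog_args_diff_Ints:
  assumes wf: "link_diagram_wf D" and fl: "flattening D a b m \<mu> \<beta> \<gamma> \<kappa>"
    and fl': "flattening D a b m \<mu>' \<beta>' \<gamma>' \<kappa>'" and c: "c \<in> crossings D"
    and np: "\<not> pinched D b c"
  shows "fst (dilog_args D \<mu>' \<beta>' \<gamma>' \<kappa>' c q) - fst (dilog_args D \<mu> \<beta> \<gamma> \<kappa> c q) \<in> \<int>" (is ?fst)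
    and "snd (dilog_args D \<mu>' \<beta>' \<gamma>' \<kappa>' c q) - snd (dilog_args D \<mu> \<beta> \<gamma> \<kappa> c q) \<in> \<int>" (is ?snd)
proof -
  have "?fst \<and> ?snd"
    by (rule flattenings_shift_at_crossing[OF wf fl fl' c],
        rule flattenings_shift_kappa[OF wf fl fl' c np])
      \<comment> \<open>\<open>no_asm_simp\<close> keeps the shift equations oriented as substitutions\<close>
      (cases q; simp (no_asm_simp) add: dilog_args_def Let_def algebra_simps)
  then show ?fst ?snd by blast+
qed

definition dilog_term :: "('c, 's, 'r, 'j) link_diagram \<Rightarrow> ('j \<Rightarrow> complex) \<Rightarrow> ('s \<Rightarrow> complex)
    \<Rightarrow> ('r \<Rightarrow> complex) \<Rightarrow> ('c \<Rightarrow> complex) \<Rightarrow> 'c \<Rightarrow> quadrant \<Rightarrow> complex" where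
  "dilog_term D \<mu> \<beta> \<gamma> \<kappa> c q =
     lifted_L (2 * pi * \<i> * of_int (sgn D c) * fst (dilog_args D \<mu> \<beta> \<gamma> \<kappa> c q))
       (2 * pi * \<i> * snd (dilog_args D \<mu> \<beta> \<gamma> \<kappa> c q))"

lemma crossing_volume_unpinched:
  "\<not> pinched D b c \<Longrightarrow> crossing_volume D b \<mu> \<beta> \<gamma> \<kappa> c =
     - \<i> * of_int (sgn D c) * (dilog_term D \<mu> \<beta> \<gamma> \<kappa> c North - dilog_term D \<mu> \<beta> \<gamma> \<kappa> c West
                               + dilog_term D \<mu> \<beta> \<gamma> \<kappa> c South - dilog_term D \<mu> \<beta> \<gamma> \<kappa> c East)"
  by (simp add: crossing_volume_def dilog_term_def dilog_args_def Let_def)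

lemma crossing_form_unpinched:
  fixes \<mu> \<mu>' :: "'j \<Rightarrow> complex" and \<beta> \<beta>' :: "'s \<Rightarrow> complex"
    and \<gamma> \<gamma>' :: "'r \<Rightarrow> complex" and \<kappa> \<kappa>' :: "'c \<Rightarrow> complex"
    and D :: "('c, 's, 'r, 'j) link_diagram"
  assumes "link_diagram_wf D" "c \<in> crossings D"
  defines "W q \<equiv> wedge (dilog_args D \<mu> \<beta> \<gamma> \<kappa> c q) (dilog_args D \<mu>' \<beta>' \<gamma>' \<kappa>' c q)"
  shows "crossing_form D \<mu> \<beta> \<gamma> \<mu>' \<beta>' \<gamma>' c = W North - W West + W South - W East"
  using link_diagram_wf_crossing(6-15)[OF assms(1,2)]
  by (simp add: W_def crossing_form_def segment_form_def strand_form_def wedge_def dilog_args_def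
      Let_def algebra_simps)

lemma crossing_volume_change_unpinched:
  assumes wf: "link_diagram_wf D" and sh: "shaping D a b m"
    and fl: "flattening D a b m \<mu> \<beta> \<gamma> \<kappa>" and fl': "flattening D a b m \<mu>' \<beta>' \<gamma>' \<kappa>'"
    and c: "c \<in> crossings D" and np: "\<not> pinched D b c"
  shows "cong_2pi2i (crossing_volume D b \<mu>' \<beta>' \<gamma>' \<kappa>' c - crossing_volume D b \<mu> \<beta> \<gamma> \<kappa> c)
           (2 * pi\<^sup>2 * \<i> * crossing_form D \<mu> \<beta> \<gamma> \<mu>' \<beta>' \<gamma>' c)"
proof -
  define e :: complex where "e = of_int (sgn D c)"
  define T where "T q = - \<i> * e * (dilog_term D \<mu>' \<beta>' \<gamma>' \<kappa>' c q - dilog_term D \<mu> \<beta> \<gamma> \<kappa> c q)" for q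
  define W where
    "W q = 2 * pi\<^sup>2 * \<i> * wedge (dilog_args D \<mu> \<beta> \<gamma> \<kappa> c q) (dilog_args D \<mu>' \<beta>' \<gamma>' \<kappa>' c q)"
    for q
  have "e = 1 \<or> e = -1"
    using link_diagram_wf_crossing(1)[OF wf c] by (auto simp: e_def)
  from dilog_term_shift[OF this dilog_args_condition[OF wf sh fl c np, folded e_def]
      dilog_args_diff_Ints[OF wf fl fl' c np]]
  have "cong_2pi2i (T q) (W q)" for q
    by (simp add: T_def W_def dilog_term_def e_def)
  then have "cong_2pi2i (T North - T West + T South - T East) (W North - W West + W South - W East)"
    by (intro cong_2pi2i_add cong_2pi2i_diff)
  then show ?thesis
    unfolding crossing_volume_unpinched[OF np]
      crossing_form_unpinched[OF wf c, where \<kappa> = \<kappa> and \<kappa>' = \<kappa>']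
    by (simp add: T_def W_def e_def algebra_simps)
qed

lemma pinched_flattening_relations:
  assumes wf: "link_diagram_wf D" and sh: "shaping D a b m" and fl: "flattening D a b m \<mu> \<beta> \<gamma> \<kappa>"
    and c: "c \<in> crossings D" and p: "pinched D b c"
  obtains i1 i2 i3 :: int where
    "\<beta> (s2 D c) = \<beta> (s1 D c) + \<mu> (comp D (s1 D c)) + of_int i1"
    "\<beta> (s1o D c) = \<beta> (s2o D c) + \<mu> (comp D (s2 D c)) + of_int i2"
    "\<beta> (s2o D c) = \<beta> (s1 D c) + of_int i3"
proof -
  note S = shaping_at_crossing[OF wf sh c] and F = flattening_at_crossing[OF wf fl c]
  have b: "b (s2o D c) = b (s1 D c)"
    using p unfolding pinched_def .
  note rel = crossing_eqs_pinched[OF link_diagram_wf_crossing(1)[OF wf c] S(1-7) S(9) b]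
  have B: "exp (2 * pi * \<i> * (\<beta> (s1 D c) + \<mu> (comp D (s1 D c)))) = b (s2 D c)"
    "exp (2 * pi * \<i> * (\<beta> (s2o D c) + \<mu> (comp D (s2 D c)))) = b (s1o D c)"
    using F(1-6) rel by (simp_all only: exp_2pi_add) (simp_all add: mult.commute)
  obtain i1 where "\<beta> (s2 D c) = \<beta> (s1 D c) + \<mu> (comp D (s1 D c)) + of_int i1"
    by (rule exp_2pi_eqE[OF F(4) B(1)])
  moreover obtain i2 where "\<beta> (s1o D c) = \<beta> (s2o D c) + \<mu> (comp D (s2 D c)) + of_int i2"
    by (rule exp_2pi_eqE[OF F(5) B(2)])
  moreover obtain i3 where "\<beta> (s2o D c) = \<beta> (s1 D c) + of_int i3"
    by (rule exp_2pi_eqE[OF F(6) F(3)[folded b]])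
  ultimately show thesis
    by (rule that)
qed

definition pinched_term :: "('c, 's, 'r, 'j) link_diagram \<Rightarrow> ('j \<Rightarrow> complex) \<Rightarrow> ('s \<Rightarrow> complex)
    \<Rightarrow> ('r \<Rightarrow> complex) \<Rightarrow> 'c \<Rightarrow> complex" where
  "pinched_term D \<mu> \<beta> \<gamma> c =
     (let e = of_int (sgn D c); \<mu>1 = \<mu> (comp D (s1 D c)); \<mu>2 = \<mu> (comp D (s2 D c));
          b1 = \<beta> (s1 D c); b2 = \<beta> (s2 D c); b1' = \<beta> (s1o D c); b2' = \<beta> (s2o D c);
          gN = \<gamma> (rN D c); gS = \<gamma> (rS D c); gW = \<gamma> (rW D c); gE = \<gamma> (rE D c)
      in b1 * (gW - gN) - b1' * (gS - gE) + b2 * (gS - gW) - b2' * (gE - gN)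
         - \<mu>1 * (e * (b1 - b1' + \<mu>2) + gS - gW) - \<mu>2 * (e * (b2' - b2 + \<mu>1) + gE - gS))"

lemma crossing_volume_pinched:
  "pinched D b c \<Longrightarrow> crossing_volume D b \<mu> \<beta> \<gamma> \<kappa> c = 2 * pi\<^sup>2 * \<i> * pinched_term D \<mu> \<beta> \<gamma> c"
  by (simp add: crossing_volume_def pinched_term_def Let_def)

lemma crossing_volume_change_pinched:
  assumes wf: "link_diagram_wf D" and sh: "shaping D a b m"
    and fl: "flattening D a b m \<mu> \<beta> \<gamma> \<kappa>" and fl': "flattening D a b m \<mu>' \<beta>' \<gamma>' \<kappa>'"
    and c: "c \<in> crossings D" and p: "pinched D b c"
  shows "cong_2pi2i (crossing_volume D b \<mu>' \<beta>' \<gamma>' \<kappa>' c - crossing_volume D b \<mu> \<beta> \<gamma> \<kappa> c)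
           (2 * pi\<^sup>2 * \<i> * crossing_form D \<mu> \<beta> \<gamma> \<mu>' \<beta>' \<gamma>' c)"
proof -
  obtain i1 i2 i3 where rel:
    "\<beta> (s2 D c) = \<beta> (s1 D c) + \<mu> (comp D (s1 D c)) + of_int i1"
    "\<beta> (s1o D c) = \<beta> (s2o D c) + \<mu> (comp D (s2 D c)) + of_int i2"
    "\<beta> (s2o D c) = \<beta> (s1 D c) + of_int i3"
    by (rule pinched_flattening_relations[OF wf sh fl c p])
  have "pinched_term D \<mu>' \<beta>' \<gamma>' c - pinched_term D \<mu> \<beta> \<gamma> c - crossing_form D \<mu> \<beta> \<gamma> \<mu>' \<beta>' \<gamma>' c \<in> \<int>"
    by (rule flattenings_shift_at_crossing[OF wf fl fl' c])
      (simp (no_asm_simp) add: link_diagram_wf_crossing(6-15)[OF wf c] pinched_term_def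
        crossing_form_def segment_form_def strand_form_def wedge_def Let_def rel algebra_simps)
  then show ?thesis
    unfolding crossing_volume_pinched[OF p] by (rule cong_2pi2iI) (simp add: algebra_simps)
qed

lemma crossing_volume_change:
  assumes "link_diagram_wf D" "shaping D a b m"
    and "flattening D a b m \<mu> \<beta> \<gamma> \<kappa>" "flattening D a b m \<mu>' \<beta>' \<gamma>' \<kappa>'" "c \<in> crossings D"
  shows "cong_2pi2i (crossing_volume D b \<mu>' \<beta>' \<gamma>' \<kappa>' c - crossing_volume D b \<mu> \<beta> \<gamma> \<kappa> c)
           (2 * pi\<^sup>2 * \<i> * crossing_form D \<mu> \<beta> \<gamma> \<mu>' \<beta>' \<gamma>' c)"
  using crossing_volume_change_pinched[OF assms] crossing_volume_change_unpinched[OF assms]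
  by blast

theorem theorem3p2:
  fixes D :: "('c, 's, 'r, 'j) link_diagram"
    and a b m :: "'s \<Rightarrow> complex"
    and \<mu> \<mu>' :: "'j \<Rightarrow> complex" and \<beta> \<beta>' :: "'s \<Rightarrow> complex"
    and \<gamma> \<gamma>' :: "'r \<Rightarrow> complex" and \<kappa> \<kappa>' :: "'c \<Rightarrow> complex"
  assumes "link_diagram_wf D"
    and "shaping D a b m"
    and "flattening D a b m \<mu> \<beta> \<gamma> \<kappa>"
    and "flattening D a b m \<mu>' \<beta>' \<gamma>' \<kappa>'"
  shows "cong_2pi2i
           (diagram_volume D b \<mu>' \<beta>' \<gamma>' \<kappa>' - diagram_volume D b \<mu> \<beta> \<gamma> \<kappa>)
           (4 * pi\<^sup>2 * \<i> *
              (\<Sum>j\<in>comps D.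
                 (logdec_lon D \<mu>' \<beta>' j - logdec_lon D \<mu> \<beta> j) * logdec_mer \<mu> j
                 - (logdec_mer \<mu>' j - logdec_mer \<mu> j) * logdec_lon D \<mu> \<beta> j))"
proof -
  have "cong_2pi2i (diagram_volume D b \<mu>' \<beta>' \<gamma>' \<kappa>' - diagram_volume D b \<mu> \<beta> \<gamma> \<kappa>)
      (\<Sum>c\<in>crossings D. 2 * pi\<^sup>2 * \<i> * crossing_form D \<mu> \<beta> \<gamma> \<mu>' \<beta>' \<gamma>' c)"
    unfolding diagram_volume_def sum_subtractf[symmetric]
    by (rule cong_2pi2i_sum) (rule crossing_volume_change[OF assms])
  also have "(\<Sum>c\<in>crossings D. 2 * pi\<^sup>2 * \<i> * crossing_form D \<mu> \<beta> \<gamma> \<mu>' \<beta>' \<gamma>' c)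
      = 4 * pi\<^sup>2 * \<i> * (\<Sum>k\<in>segs D. of_int (eta D k) * strand_form D \<mu> \<beta> \<mu>' \<beta>' k)"
    by (simp add: sum_distrib_left[symmetric] sum_crossing_form[OF assms(1)])
  finally show ?thesis
    by (simp only: sum_logdec_wedge[OF assms(1)])
qed

end
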